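(* Let $D$ be a nondegenerate dendrite and let $f\colon D\to D$ be continuous. Suppose $p$ and $q$ are two distinct endpoints of $D$ fixed by $f$, such that $p$ is not a weakly repelling fixed point of $f$ for $D\setminus\{p\}$ and $q$ is not a weakly repelling fixed point of $f$ for $D\setminus\{q\}$. Then there exists a cutpoint $r$ of $D$ with $r\in(p,q)$ and $f(r)=r$.
   Context: A dendrite is a locally connected continuum containing no simple closed curve; $[x,y]$ is the unique arc from $x$ to $y$ and $(x,y)=[x,y]\setminus\{x,y\}$. An endpoint is a point $x$ with $D\setminus\{x\}$ connected; a cutpoint is a point $x$ with $D\setminus\{x\}$ disconnected. A point $x$ separates $a$ and $b$ if they lie in different components of $D\setminus\{x\}$. If $a\in D$ is fixed by $f$ and $B$ is a component of $D\setminus\{a\}$, then $a$ is a weakly repelling fixed point of $f$ for $B$ if at least one of the following holds: in $B$, arbitrarily close to $a$, there is a cutpoint of $D$ fixed by $f$; or in $B$, arbitrarily close to $a$, there is a cutpoint $x$ of $D$ separating $a$ from $f(x)$. *)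

theory Defs
  imports "HOL-Analysis.Analysis"
begin

definition dendrite :: "'a::metric_space set \<Rightarrow> bool" where
  "dendrite D \<longleftrightarrow> D \<noteq> {} \<and> compact D \<and> connected D \<and> locally connected D \<and>
     \<not> (\<exists>g. simple_path g \<and> pathfinish g = pathstart g \<and> path_image g \<subseteq> D)"

definition nondegenerate :: "'a set \<Rightarrow> bool" where
  "nondegenerate D \<longleftrightarrow> (\<exists>x\<in>D. \<exists>y\<in>D. x \<noteq> y)"

text \<open>The arc [x,y] in D (unique in a dendrite).\<close>
definition darc :: "'a::metric_space set \<Rightarrow> 'a \<Rightarrow> 'a \<Rightarrow> 'a set" where
  "darc D x y = (if x = y then {x} else
     {z. \<exists>g. arc g \<and> path_image g \<subseteq> D \<and> pathstart g = x \<and> pathfinish g = y \<and> z \<in> path_image g})"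

definition open_darc :: "'a::metric_space set \<Rightarrow> 'a \<Rightarrow> 'a \<Rightarrow> 'a set" where
  "open_darc D x y = darc D x y - {x, y}"

definition endpoint :: "'a::topological_space set \<Rightarrow> 'a \<Rightarrow> bool" where
  "endpoint D x \<longleftrightarrow> x \<in> D \<and> connected (D - {x})"

definition cutpoint :: "'a::topological_space set \<Rightarrow> 'a \<Rightarrow> bool" where
  "cutpoint D x \<longleftrightarrow> x \<in> D \<and> \<not> connected (D - {x})"

definition separates :: "'a::topological_space set \<Rightarrow> 'a \<Rightarrow> 'a \<Rightarrow> 'a \<Rightarrow> bool" where
  "separates D x a b \<longleftrightarrow> a \<in> D - {x} \<and> b \<in> D - {x} \<and>
     connected_component_set (D - {x}) a \<noteq> connected_component_set (D - {x}) b"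

definition weakly_repelling :: "'a::metric_space set \<Rightarrow> ('a \<Rightarrow> 'a) \<Rightarrow> 'a \<Rightarrow> 'a set \<Rightarrow> bool" where
  "weakly_repelling D f a B \<longleftrightarrow>
     (\<forall>e>0. \<exists>x\<in>B. dist x a < e \<and> cutpoint D x \<and> f x = x) \<or>
     (\<forall>e>0. \<exists>x\<in>B. dist x a < e \<and> cutpoint D x \<and> separates D x a (f x))"

end

theory Submission
  imports Defs
begin

text \<open>An arc g from p to q exists because a compact, connected, locally connected metric space
  is arcwise connected. Every interior point x = g t of the arc separates p from q: otherwise an arc
  from p to q inside the component of D - {x} containing p would, together with g, contain a simple
  closed curve. That p is not weakly repelling means that f maps arc points x near p, unless fixed,
  into the component of D - {x} containing p; near q the images lie in the component containing q.
  If f had no fixed point on the open arc, the set of parameters t whose image lies on the p-side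
  would persist to the right of each of its points (continuity of f and openness of components),
  and its complement would persist to the left; a real induction from near 0 to near 1 then
  contradicts the behaviour of f near q.\<close>

section \<open>Compact locally connected metric spaces are arcwise connected\<close>

lemma compact_locally_connected_uniformly:
  fixes D :: "'a::metric_space set"
  assumes "compact D" "locally connected D" "0 < \<epsilon>"
  obtains \<delta> where "0 < \<delta>"
    "\<And>y z. \<lbrakk>y \<in> D; z \<in> D; dist y z < \<delta>\<rbrakk> \<Longrightarrow> \<exists>C. connected C \<and> C \<subseteq> D \<and> y \<in> C \<and> z \<in> C \<and> C \<subseteq> ball y \<epsilon>"
proof (cases "D = {}")
  case True
  then show ?thesis using that[of 1] by auto
next
  case False
  have "\<exists>U. open U \<and> w \<in> U \<and> connected (D \<inter> U) \<and> D \<inter> U \<subseteq> ball w (\<epsilon>/2)" if w: "w \<in> D" for w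
  proof -
    define V where "V = connected_component_set (D \<inter> ball w (\<epsilon>/2)) w"
    have V: "openin (top_of_set D) V" "connected V" "w \<in> V" "V \<subseteq> ball w (\<epsilon>/2)"
      using w assms(3) locally_connected_2[OF assms(2), of "D \<inter> ball w (\<epsilon>/2)" w]
        connected_component_subset[of "D \<inter> ball w (\<epsilon>/2)" w]
      by (auto simp: V_def openin_open_Int)
    then obtain U where "open U" "V = D \<inter> U" by (meson openin_open)
    then show ?thesis using V by blast
  qed
  then obtain U where U: "\<And>w. w \<in> D \<Longrightarrow> open (U w) \<and> w \<in> U w \<and> connected (D \<inter> U w) \<and> D \<inter> U w \<subseteq> ball w (\<epsilon>/2)"
    by metis
  obtain \<delta> where \<delta>: "0 < \<delta>" "\<And>T. \<lbrakk>T \<subseteq> D; diameter T < \<delta>\<rbrakk> \<Longrightarrow> \<exists>B \<in> U ` D. T \<subseteq> B"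
    using Lebesgue_number_lemma[OF assms(1), of "U ` D"] U False by blast
  show ?thesis
  proof (rule that[OF \<delta>(1)])
    fix y z assume yz: "y \<in> D" "z \<in> D" "dist y z < \<delta>"
    have "diameter {y, z} \<le> dist y z"
      unfolding diameter_def by (simp add: dist_commute) (rule cSup_least, auto)
    then obtain w where w: "w \<in> D" "{y, z} \<subseteq> U w" using \<delta>(2)[of "{y, z}"] yz by force
    have "D \<inter> U w \<subseteq> ball y \<epsilon>"
    proof
      fix v assume "v \<in> D \<inter> U w"
      then have "dist w y < \<epsilon>/2" "dist w v < \<epsilon>/2" using U[OF w(1)] w yz by auto
      then show "v \<in> ball y \<epsilon>" by (metis dist_commute dist_triangle_half_l mem_ball)
    qed
    then show "\<exists>C. connected C \<and> C \<subseteq> D \<and> y \<in> C \<and> z \<in> C \<and> C \<subseteq> ball y \<epsilon>"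
      using U[OF w(1)] w yz by (intro exI[of _ "D \<inter> U w"]) auto
  qed
qed

definition delta_chain :: "'a::metric_space set \<Rightarrow> real \<Rightarrow> nat \<Rightarrow> (nat \<Rightarrow> 'a) \<Rightarrow> bool" where
  "delta_chain C \<delta> N z \<longleftrightarrow> (\<forall>j\<le>N. z j \<in> C) \<and> (\<forall>j<N. dist (z j) (z (Suc j)) < \<delta>)"

lemma delta_chain_snoc:
  assumes "delta_chain C \<delta> N z" "y \<in> C" "dist (z N) y < \<delta>"
  shows "delta_chain C \<delta> (Suc N) (z(Suc N := y))"
  using assms by (auto simp: delta_chain_def less_Suc_eq le_Suc_eq)

text \<open>Chains of every sufficiently large length are needed to refine all links of a chain
  by chains of one common length.\<close>
lemma connected_imp_delta_chains:
  assumes "connected C" "u \<in> C" "v \<in> C" "0 < \<delta>"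
  shows "\<exists>k. \<forall>M\<ge>k. \<exists>z. delta_chain C \<delta> M z \<and> z 0 = u \<and> z M = v"
proof -
  define P where "P x \<longleftrightarrow> (\<exists>k. \<forall>M\<ge>k. \<exists>z. delta_chain C \<delta> M z \<and> z 0 = u \<and> z M = x)" for x
  have "P v"
  proof (rule connected_induction_simple[OF assms(1-3)])
    show "P u"
      using assms(2,4) by (auto simp: P_def delta_chain_def intro!: exI[of _ 0] exI[of _ "\<lambda>_. u"])
    fix a assume "a \<in> C"
    show "\<exists>T. openin (top_of_set C) T \<and> a \<in> T \<and> (\<forall>x\<in>T. \<forall>y\<in>T. P x \<longrightarrow> P y)"
    proof (intro exI conjI ballI impI)
      show "openin (top_of_set C) (C \<inter> ball a (\<delta>/2))" by (simp add: openin_open_Int)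
      show "a \<in> C \<inter> ball a (\<delta>/2)" using \<open>a \<in> C\<close> assms(4) by simp
      fix x y assume xy: "x \<in> C \<inter> ball a (\<delta>/2)" "y \<in> C \<inter> ball a (\<delta>/2)" and "P x"
      then obtain k where k: "\<And>M. k \<le> M \<Longrightarrow> \<exists>z. delta_chain C \<delta> M z \<and> z 0 = u \<and> z M = x"
        unfolding P_def by blast
      have "dist x a < \<delta>/2" "dist y a < \<delta>/2" using xy by (auto simp: dist_commute)
      then have "dist x y < \<delta>" by (rule dist_triangle_half_l)
      have "\<exists>z. delta_chain C \<delta> M z \<and> z 0 = u \<and> z M = y" if "Suc k \<le> M" for M
      proof -
        obtain M' where M: "M = Suc M'" "k \<le> M'"
          using \<open>Suc k \<le> M\<close> by (cases M) auto
        then obtain z where z: "delta_chain C \<delta> M' z" "z 0 = u" "z M' = x" using k by blast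
        have "delta_chain C \<delta> M (z(M := y))"
          unfolding M(1) using xy \<open>dist x y < \<delta>\<close> z by (intro delta_chain_snoc) auto
        then show ?thesis using z(2) M(1) by (intro exI[of _ "z(M := y)"]) simp
      qed
      then show "P y" unfolding P_def by blast
    qed
  qed
  then show ?thesis unfolding P_def .
qed

lemma delta_chain_concat:
  assumes "0 < M"
    and pieces: "\<And>i. i < N \<Longrightarrow> delta_chain (C i) \<delta> M (z i) \<and> z i 0 = h i \<and> z i M = h (Suc i)"
  obtains h' where "\<And>i. h' (i * M) = h i"
    and "\<And>l. l < N * M \<Longrightarrow> h' l \<in> C (l div M)"
    and "\<And>l. l < N * M \<Longrightarrow> dist (h' l) (h' (Suc l)) < \<delta>"
proof -
  define h' where "h' l = (if l mod M = 0 then h (l div M) else z (l div M) (l mod M))" for l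
  have start: "h' (i * M) = h i" for i
    using \<open>0 < M\<close> by (simp add: h'_def)
  have block: "h' (i * M + j) = z i j" if "i < N" "j \<le> M" for i j
  proof (cases "j = M")
    case True
    have "i * M + j = Suc i * M" using True by simp
    then show ?thesis using pieces[OF \<open>i < N\<close>] True \<open>0 < M\<close> by (simp add: h'_def)
  next
    case False
    then have "(i * M + j) mod M = j" "(i * M + j) div M = i" using \<open>j \<le> M\<close> by auto
    then show ?thesis using pieces[OF \<open>i < N\<close>] by (auto simp: h'_def)
  qed
  have "h' l \<in> C (l div M) \<and> dist (h' l) (h' (Suc l)) < \<delta>" if "l < N * M" for l
  proof -
    define i j where "i = l div M" and "j = l mod M"
    have "i < N" "j < M" using \<open>l < N * M\<close> \<open>0 < M\<close> by (auto simp: i_def j_def less_mult_imp_div_less)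
    moreover have l: "l = i * M + j" "Suc l = i * M + Suc j" by (simp_all add: i_def j_def)
    ultimately have "h' l = z i j" "h' (Suc l) = z i (Suc j)"
      using block[of i j] block[of i "Suc j"] by simp_all
    then show ?thesis using pieces[OF \<open>i < N\<close>] \<open>j < M\<close> by (auto simp: delta_chain_def i_def)
  qed
  then show ?thesis using that start by blast
qed

lemma delta_chain_links_refinement:
  assumes ulc: "\<And>y z. \<lbrakk>y \<in> D; z \<in> D; dist y z < \<delta>\<rbrakk> \<Longrightarrow> \<exists>C. connected C \<and> C \<subseteq> D \<and> y \<in> C \<and> z \<in> C \<and> C \<subseteq> ball y \<epsilon>"
    and "0 < \<delta>'" and h: "delta_chain D \<delta> N h"
  obtains M C z where "0 < M" "\<And>i. i < N \<Longrightarrow> C i \<subseteq> D \<inter> ball (h i) \<epsilon>"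
    "\<And>i. i < N \<Longrightarrow> delta_chain (C i) \<delta>' M (z i) \<and> z i 0 = h i \<and> z i M = h (Suc i)"
proof -
  have "\<exists>C. connected C \<and> C \<subseteq> D \<and> h i \<in> C \<and> h (Suc i) \<in> C \<and> C \<subseteq> ball (h i) \<epsilon>" if "i < N" for i
    using h that by (intro ulc) (auto simp: delta_chain_def)
  then obtain C where C: "\<And>i. i < N \<Longrightarrow> connected (C i) \<and> C i \<subseteq> D \<and> h i \<in> C i \<and> h (Suc i) \<in> C i \<and> C i \<subseteq> ball (h i) \<epsilon>"
    by metis
  have "\<exists>k. \<forall>M\<ge>k. \<exists>z. delta_chain (C i) \<delta>' M z \<and> z 0 = h i \<and> z M = h (Suc i)" if "i < N" for i
    using C[OF that] \<open>0 < \<delta>'\<close> by (intro connected_imp_delta_chains) auto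
  then obtain k where k: "\<And>i M. \<lbrakk>i < N; k i \<le> M\<rbrakk> \<Longrightarrow> \<exists>z. delta_chain (C i) \<delta>' M z \<and> z 0 = h i \<and> z M = h (Suc i)"
    by metis
  define M where "M = Suc (\<Sum>i<N. k i)"
  have "k i \<le> M" if "i < N" for i
    using member_le_sum[of i "{..<N}" k] that by (simp add: M_def)
  then have "\<exists>z. delta_chain (C i) \<delta>' M z \<and> z 0 = h i \<and> z M = h (Suc i)" if "i < N" for i
    using k that by blast
  then obtain z where z: "\<And>i. i < N \<Longrightarrow> delta_chain (C i) \<delta>' M (z i) \<and> z i 0 = h i \<and> z i M = h (Suc i)"
    by metis
  show ?thesis
    using C z by (intro that[of M C z]) (auto simp: M_def)
qed

lemma delta_chain_refinement:
  assumes ulc: "\<And>y z. \<lbrakk>y \<in> D; z \<in> D; dist y z < \<delta>\<rbrakk> \<Longrightarrow> \<exists>C. connected C \<and> C \<subseteq> D \<and> y \<in> C \<and> z \<in> C \<and> C \<subseteq> ball y \<epsilon>"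
    and "0 < \<epsilon>" "0 < \<delta>'" and h: "delta_chain D \<delta> N h"
  obtains M h' where "0 < M" "delta_chain D \<delta>' (N * M) h'" "h' 0 = h 0" "h' (N * M) = h N"
    "\<And>l. l \<le> N * M \<Longrightarrow> dist (h (l div M)) (h' l) < \<epsilon>"
proof -
  obtain M C z where "0 < M" and C: "\<And>i. i < N \<Longrightarrow> C i \<subseteq> D \<inter> ball (h i) \<epsilon>"
    and z: "\<And>i. i < N \<Longrightarrow> delta_chain (C i) \<delta>' M (z i) \<and> z i 0 = h i \<and> z i M = h (Suc i)"
    using delta_chain_links_refinement[OF ulc \<open>0 < \<delta>'\<close> h] by blast
  obtain h' where h': "\<And>i. h' (i * M) = h i" "\<And>l. l < N * M \<Longrightarrow> h' l \<in> C (l div M)"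
    "\<And>l. l < N * M \<Longrightarrow> dist (h' l) (h' (Suc l)) < \<delta>'"
    using delta_chain_concat[where C = C and z = z and h = h and \<delta> = \<delta>' and N = N, OF \<open>0 < M\<close> z]
    by blast
  have in_C: "l div M < N \<and> h' l \<in> C (l div M)" if "l < N * M" for l
    using that \<open>0 < M\<close> h'(2) by (simp add: less_mult_imp_div_less)
  show ?thesis
  proof
    show "0 < M" by fact
    show "h' 0 = h 0" "h' (N * M) = h N" using h'(1)[of 0] h'(1)[of N] by simp_all
    show "delta_chain D \<delta>' (N * M) h'"
      unfolding delta_chain_def
    proof (intro conjI allI impI)
      fix l assume "l \<le> N * M"
      show "h' l \<in> D"
      proof (cases "l < N * M")
        case True
        then show ?thesis using in_C[OF True] C[of "l div M"] by blast
      next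
        case False
        then have "l = N * M" using \<open>l \<le> N * M\<close> by simp
        then show ?thesis using h'(1)[of N] h by (simp add: delta_chain_def)
      qed
    next
      fix l assume "l < N * M"
      then show "dist (h' l) (h' (Suc l)) < \<delta>'" by (rule h'(3))
    qed
    fix l assume "l \<le> N * M"
    show "dist (h (l div M)) (h' l) < \<epsilon>"
    proof (cases "l < N * M")
      case True
      then have "h' l \<in> ball (h (l div M)) \<epsilon>" using in_C[OF True] C[of "l div M"] by blast
      then show ?thesis by simp
    next
      case False
      then have "l = N * M" using \<open>l \<le> N * M\<close> by simp
      then show ?thesis using h'(1)[of N] \<open>0 < M\<close> \<open>0 < \<epsilon>\<close> by simp
    qed
  qed
qed

lemma geometric_steps_limit:
  fixes s :: "nat \<Rightarrow> 'a::metric_space"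
  assumes "complete D" "\<And>n. s n \<in> D" "0 < c" and steps: "\<And>n. dist (s n) (s (Suc n)) \<le> c * (1/2)^n"
  shows "lim s \<in> D" "\<And>n. dist (s n) (lim s) \<le> 2 * c * (1/2)^n"
proof -
  have tail: "dist (s n) (s (n + k)) \<le> 2 * c * (1/2)^n - 2 * c * (1/2)^(n + k)" for n k
  proof (induction k)
    case (Suc k)
    have "dist (s n) (s (n + Suc k)) \<le> dist (s n) (s (n + k)) + dist (s (n + k)) (s (Suc (n + k)))"
      by (simp add: dist_triangle)
    also have "\<dots> \<le> 2 * c * (1/2)^n - 2 * c * (1/2)^(n + k) + c * (1/2)^(n + k)"
      using Suc steps[of "n + k"] by linarith
    finally show ?case by simp
  qed simp
  have bound: "dist (s n) (s m) \<le> 2 * c * (1/2)^n" if "n \<le> m" for n m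
  proof -
    have "0 \<le> c * (1/2::real)^m" using \<open>0 < c\<close> by simp
    then show ?thesis using tail[of n "m - n"] that by simp
  qed
  have "Cauchy s"
  proof (rule metric_CauchyI)
    fix e :: real assume "0 < e"
    obtain N where N: "(1/2::real)^N < e / (4 * c)"
      using real_arch_pow_inv[of "e / (4 * c)" "1/2"] \<open>0 < e\<close> \<open>0 < c\<close> by auto
    have "4 * c * (1/2::real)^N < e" using N \<open>0 < c\<close> by (simp add: field_simps)
    moreover have "dist (s m) (s n) \<le> 4 * c * (1/2)^N" if "N \<le> m" "N \<le> n" for m n
      using bound[OF that(1)] bound[OF that(2)] dist_triangle3[of "s m" "s n" "s N"] by linarith
    ultimately show "\<exists>N. \<forall>m\<ge>N. \<forall>n\<ge>N. dist (s m) (s n) < e" by force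
  qed
  then obtain l where "l \<in> D" "s \<longlonglongrightarrow> l"
    using assms(1,2) unfolding complete_def by blast
  moreover have "dist (s n) l \<le> 2 * c * (1/2)^n" for n
  proof (rule LIMSEQ_le_const2)
    show "(\<lambda>m. dist (s n) (s m)) \<longlonglongrightarrow> dist (s n) l" by (intro tendsto_intros \<open>s \<longlonglongrightarrow> l\<close>)
    show "\<exists>N. \<forall>m\<ge>N. dist (s n) (s m) \<le> 2 * c * (1/2)^n" using bound by blast
  qed
  ultimately show "lim s \<in> D" "\<And>n. dist (s n) (lim s) \<le> 2 * c * (1/2)^n"
    by (simp_all add: limI)
qed

lemma continuous_on_geometric_limit:
  fixes g :: "nat \<Rightarrow> 'b::metric_space \<Rightarrow> 'a::metric_space"
  assumes "complete D" "0 < c" "\<And>n t. t \<in> S \<Longrightarrow> g n t \<in> D"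
    and steps: "\<And>n t. t \<in> S \<Longrightarrow> dist (g n t) (g (Suc n) t) \<le> c * (1/2)^n"
    and oscillation: "\<And>n. \<exists>d>0. \<forall>s\<in>S. \<forall>t\<in>S. dist s t < d \<longrightarrow> dist (g n s) (g n t) \<le> c * (1/2)^n"
  shows "continuous_on S (\<lambda>t. lim (\<lambda>n. g n t))"
  unfolding continuous_on_iff
proof (intro ballI allI impI)
  fix t \<eta> assume "t \<in> S" "0 < (\<eta>::real)"
  obtain n where n: "(1/2::real)^n < \<eta> / (5 * c)"
    using real_arch_pow_inv[of "\<eta> / (5 * c)" "1/2"] \<open>0 < \<eta>\<close> \<open>0 < c\<close> by auto
  then have "5 * c * (1/2::real)^n < \<eta>" using \<open>0 < c\<close> by (simp add: field_simps)
  obtain d where "0 < d" and d: "\<And>s. \<lbrakk>s \<in> S; dist s t < d\<rbrakk> \<Longrightarrow> dist (g n s) (g n t) \<le> c * (1/2)^n"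
    using oscillation[of n] \<open>t \<in> S\<close> by blast
  have near: "dist (g n s) (lim (\<lambda>n. g n s)) \<le> 2 * c * (1/2)^n" if "s \<in> S" for s
    using geometric_steps_limit[OF assms(1), of "\<lambda>n. g n s"] assms(3) steps that \<open>0 < c\<close> by blast
  show "\<exists>d>0. \<forall>s\<in>S. dist s t < d \<longrightarrow> dist (lim (\<lambda>n. g n s)) (lim (\<lambda>n. g n t)) < \<eta>"
  proof (intro exI conjI ballI impI)
    fix s assume "s \<in> S" "dist s t < d"
    have "dist (lim (\<lambda>n. g n s)) (lim (\<lambda>n. g n t))
        \<le> dist (g n s) (lim (\<lambda>n. g n s)) + dist (g n s) (lim (\<lambda>n. g n t))"
      by (rule dist_triangle3)
    moreover have "dist (g n s) (lim (\<lambda>n. g n t)) \<le> dist (g n s) (g n t) + dist (g n t) (lim (\<lambda>n. g n t))"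
      by (rule dist_triangle)
    ultimately show "dist (lim (\<lambda>n. g n s)) (lim (\<lambda>n. g n t)) < \<eta>"
      using near[OF \<open>s \<in> S\<close>] near[OF \<open>t \<in> S\<close>] d[OF \<open>s \<in> S\<close> \<open>dist s t < d\<close>]
        \<open>5 * c * (1/2)^n < \<eta>\<close> by linarith
  qed fact
qed

lemma nat_floor_mult_le:
  assumes "t \<in> {0..1}"
  shows "nat \<lfloor>t * real N\<rfloor> \<le> N"
proof -
  have "t * real N \<le> real N" using assms by (simp add: mult_left_le_one_le)
  then show ?thesis by (simp add: floor_le_iff nat_le_iff)
qed

lemma nat_floor_mult_div:
  assumes "0 \<le> t" "0 < M"
  shows "nat \<lfloor>t * real (N * M)\<rfloor> div M = nat \<lfloor>t * real N\<rfloor>"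
proof -
  have "\<lfloor>t * real (N * M)\<rfloor> div int M = \<lfloor>t * real (N * M) / real M\<rfloor>"
    using floor_divide_real_eq_div[of "int M" "t * real (N * M)"] \<open>0 < M\<close> by simp
  also have "t * real (N * M) / real M = t * real N" using \<open>0 < M\<close> by simp
  finally have "\<lfloor>t * real (N * M)\<rfloor> div int M = \<lfloor>t * real N\<rfloor>" .
  moreover have "0 \<le> \<lfloor>t * real (N * M)\<rfloor>" using \<open>0 \<le> t\<close> by simp
  ultimately show ?thesis by (metis nat_div_distrib nat_int)
qed

lemma delta_chain_refinement_sample:
  assumes "0 < M" "\<forall>l\<le>N * M. dist (h (l div M)) (h' l) < \<epsilon>" "t \<in> {0..1}"
  shows "dist (h (nat \<lfloor>t * real N\<rfloor>)) (h' (nat \<lfloor>t * real (N * M)\<rfloor>)) < \<epsilon>"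
proof -
  have "nat \<lfloor>t * real (N * M)\<rfloor> \<le> N * M" by (rule nat_floor_mult_le[OF assms(3)])
  moreover have "nat \<lfloor>t * real (N * M)\<rfloor> div M = nat \<lfloor>t * real N\<rfloor>"
    using nat_floor_mult_div[of t M N] assms(1,3) by simp
  ultimately show ?thesis using assms(2) by metis
qed

lemma delta_chain_sample_close:
  assumes h: "delta_chain D \<delta> N h" and "0 < \<delta>" "s \<in> {0..1}" "t \<in> {0..1}" "\<bar>s - t\<bar> * real N < 1"
  shows "dist (h (nat \<lfloor>s * real N\<rfloor>)) (h (nat \<lfloor>t * real N\<rfloor>)) < \<delta>"
proof -
  define i j where "i = nat \<lfloor>s * real N\<rfloor>" and "j = nat \<lfloor>t * real N\<rfloor>"
  have "\<bar>s * real N - t * real N\<bar> < 1" using assms(5) by (simp add: abs_mult left_diff_distrib[symmetric])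
  then have "i \<le> Suc j" "j \<le> Suc i" using assms(3,4) unfolding i_def j_def by linarith+
  moreover have "i \<le> N" "j \<le> N" using assms(3,4) nat_floor_mult_le by (auto simp: i_def j_def)
  ultimately consider "i = j" | "i = Suc j" "j < N" | "j = Suc i" "i < N" by linarith
  then show ?thesis
    using h \<open>0 < \<delta>\<close> unfolding i_def[symmetric] j_def[symmetric]
    by cases (auto simp: delta_chain_def dist_commute)
qed

lemma refining_delta_chains:
  fixes D :: "'a::metric_space set"
  assumes ulc: "\<And>n y z. \<lbrakk>y \<in> D; z \<in> D; dist y z < \<delta> n\<rbrakk> \<Longrightarrow>
      \<exists>C. connected C \<and> C \<subseteq> D \<and> y \<in> C \<and> z \<in> C \<and> C \<subseteq> ball y (\<epsilon> n)"
    and "\<And>n. 0 < \<delta> n" "\<And>n. 0 < \<epsilon> n" and "x \<in> D" "y \<in> D" "dist x y < \<delta> 0"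
  obtains N H where "N 0 = 1" "\<And>n. 0 < N n" "\<And>n. delta_chain D (\<delta> n) (N n) (H n)"
    "\<And>n. H n 0 = x" "\<And>n. H n (N n) = y"
    "\<And>n. \<exists>M>0. N (Suc n) = N n * M \<and> (\<forall>l\<le>N (Suc n). dist (H n (l div M)) (H (Suc n) l) < \<epsilon> n)"
proof -
  define P where "P n = (\<lambda>(N::nat, h::nat \<Rightarrow> 'a). 0 < N \<and> delta_chain D (\<delta> n) N h \<and> h 0 = x \<and> h N = y \<and> (n = 0 \<longrightarrow> N = 1))"
    for n
  define Q where "Q n = (\<lambda>(N::nat, h::nat \<Rightarrow> 'a) (N', h'). \<exists>M>0. N' = N * M \<and> (\<forall>l\<le>N'. dist (h (l div M)) (h' l) < \<epsilon> n))"
    for n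
  have "\<exists>F. \<forall>n. P n (F n) \<and> Q n (F n) (F (Suc n))"
  proof (rule dependent_nat_choice)
    show "\<exists>Nh. P 0 Nh"
      using assms(4-6) by (intro exI[of _ "(1, \<lambda>j. if j = 0 then x else y)"]) (auto simp: P_def delta_chain_def)
  next
    fix Nh and n :: nat assume "P n Nh"
    obtain N h where Nh: "Nh = (N, h)" by fastforce
    then have h: "0 < N" "delta_chain D (\<delta> n) N h" "h 0 = x" "h N = y" using \<open>P n Nh\<close> by (auto simp: P_def)
    obtain M h' where "0 < M" "delta_chain D (\<delta> (Suc n)) (N * M) h'" "h' 0 = h 0" "h' (N * M) = h N"
      "\<And>l. l \<le> N * M \<Longrightarrow> dist (h (l div M)) (h' l) < \<epsilon> n"
      using delta_chain_refinement[OF ulc assms(3) assms(2) h(2)] by blast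
    then show "\<exists>Nh'. P (Suc n) Nh' \<and> Q n Nh Nh'"
      using h by (intro exI[of _ "(N * M, h')"]) (auto simp: P_def Q_def Nh)
  qed
  then obtain F where F: "\<And>n. P n (F n)" "\<And>n. Q n (F n) (F (Suc n))" by blast
  show ?thesis
  proof
    show "fst (F 0) = 1" using F(1)[of 0] by (auto simp: P_def split: prod.splits)
    fix n
    show "0 < fst (F n)" "delta_chain D (\<delta> n) (fst (F n)) (snd (F n))"
      "snd (F n) 0 = x" "snd (F n) (fst (F n)) = y"
      using F(1)[of n] by (auto simp: P_def split: prod.splits)
    show "\<exists>M>0. fst (F (Suc n)) = fst (F n) * M \<and>
        (\<forall>l\<le>fst (F (Suc n)). dist (snd (F n) (l div M)) (snd (F (Suc n)) l) < \<epsilon> n)"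
      using F(2)[of n] by (auto simp: Q_def split: prod.splits)
  qed
qed

text \<open>The path is the pointwise limit of the step functions sampling the n-th chain at t * N n:
  the refinement bounds make these uniformly Cauchy, and the closeness of consecutive chain
  points bounds their oscillation.\<close>
lemma refining_delta_chains_limit_path:
  fixes D :: "'a::metric_space set"
  assumes "complete D" "0 < c" and N: "N 0 = 1" "\<And>n. 0 < N n"
    and H: "\<And>n. delta_chain D (\<delta> n) (N n) (H n)" "\<And>n. H n 0 = x" "\<And>n. H n (N n) = y"
    and refine: "\<And>n. \<exists>M>0. N (Suc n) = N n * M \<and>
      (\<forall>l\<le>N (Suc n). dist (H n (l div M)) (H (Suc n) l) < c * (1/2)^n)"
    and \<delta>: "\<And>n. 0 < \<delta> n" "\<And>n. \<delta> n \<le> c * (1/2)^n"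
  shows "\<exists>\<gamma>. path \<gamma> \<and> path_image \<gamma> \<subseteq> D \<inter> cball x (3 * c) \<and> pathstart \<gamma> = x \<and> pathfinish \<gamma> = y"
proof -
  define g where "g n t = H n (nat \<lfloor>t * real (N n)\<rfloor>)" for n t
  have gD: "g n t \<in> D" if "t \<in> {0..1}" for n t
    using H(1)[of n] nat_floor_mult_le[OF that] by (auto simp: g_def delta_chain_def)
  have steps: "dist (g n t) (g (Suc n) t) \<le> c * (1/2)^n" if "t \<in> {0..1}" for n t
  proof -
    obtain M where M: "0 < M" "N (Suc n) = N n * M"
      "\<forall>l\<le>N (Suc n). dist (H n (l div M)) (H (Suc n) l) < c * (1/2)^n"
      using refine[of n] by blast
    show ?thesis
      using delta_chain_refinement_sample[OF M(1) M(3)[unfolded M(2)] that] by (simp add: g_def M(2))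
  qed
  have oscillation: "\<exists>d>0. \<forall>s\<in>{0..1::real}. \<forall>t\<in>{0..1}. dist s t < d \<longrightarrow> dist (g n s) (g n t) \<le> c * (1/2)^n"
    for n
  proof (intro exI conjI ballI impI)
    show "0 < 1 / real (N n)" using N(2)[of n] by simp
    fix s t :: real assume st: "s \<in> {0..1}" "t \<in> {0..1}" "dist s t < 1 / real (N n)"
    then have "\<bar>s - t\<bar> * real (N n) < 1" using N(2)[of n] by (simp add: dist_real_def field_simps)
    then have "dist (g n s) (g n t) < \<delta> n"
      unfolding g_def using delta_chain_sample_close[OF H(1) \<delta>(1)] st by blast
    then show "dist (g n s) (g n t) \<le> c * (1/2)^n" using \<delta>(2)[of n] by linarith
  qed
  define \<gamma> where "\<gamma> t = lim (\<lambda>n. g n t)" for t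
  have "continuous_on {0..1} \<gamma>"
    unfolding \<gamma>_def by (rule continuous_on_geometric_limit[OF assms(1,2) gD steps oscillation])
  moreover have lim: "\<gamma> t \<in> D" "dist (g 0 t) (\<gamma> t) \<le> 2 * c" if "t \<in> {0..1}" for t
  proof -
    note limit = geometric_steps_limit[of D "\<lambda>n. g n t" c, OF assms(1) gD[OF that] \<open>0 < c\<close> steps[OF that]]
    show "\<gamma> t \<in> D" using limit(1) by (simp add: \<gamma>_def)
    show "dist (g 0 t) (\<gamma> t) \<le> 2 * c" using limit(2)[of 0] by (simp add: \<gamma>_def)
  qed
  moreover have "\<gamma> 0 = x" "\<gamma> 1 = y" using H(2,3) by (simp_all add: \<gamma>_def g_def limI)
  moreover have "dist x (\<gamma> t) \<le> 3 * c" if "t \<in> {0..1}" for t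
  proof -
    have "dist x y \<le> c" using H(1)[of 0] H(2,3)[of 0] N(1) \<delta>(2)[of 0] by (simp add: delta_chain_def)
    moreover have "g 0 t = x \<or> g 0 t = y"
      using nat_floor_mult_le[OF that, of 1] H(2,3)[of 0] N(1) by (auto simp: g_def le_Suc_eq)
    ultimately have "dist x (g 0 t) \<le> c" using \<open>0 < c\<close> by auto
    then show ?thesis using lim(2)[OF that] dist_triangle[of x "\<gamma> t" "g 0 t"] by linarith
  qed
  ultimately show ?thesis
    by (intro exI[of _ \<gamma>]) (auto simp: path_def pathstart_def pathfinish_def path_image_def)
qed

lemma compact_locally_connected_short_paths:
  fixes D :: "'a::metric_space set"
  assumes "compact D" "locally connected D" "0 < c"
  obtains d where "0 < d" "\<And>x y. \<lbrakk>x \<in> D; y \<in> D; dist x y < d\<rbrakk> \<Longrightarrow>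
    \<exists>\<gamma>. path \<gamma> \<and> path_image \<gamma> \<subseteq> D \<inter> cball x (3 * c) \<and> pathstart \<gamma> = x \<and> pathfinish \<gamma> = y"
proof -
  have "\<exists>\<delta>>0. \<forall>y z. y \<in> D \<longrightarrow> z \<in> D \<longrightarrow> dist y z < \<delta> \<longrightarrow>
      (\<exists>C. connected C \<and> C \<subseteq> D \<and> y \<in> C \<and> z \<in> C \<and> C \<subseteq> ball y (c * (1/2)^n))" for n
  proof -
    have "0 < c * (1/2::real)^n" using \<open>0 < c\<close> by simp
    then obtain \<delta> where "0 < \<delta>" "\<And>y z. \<lbrakk>y \<in> D; z \<in> D; dist y z < \<delta>\<rbrakk> \<Longrightarrow>
        \<exists>C. connected C \<and> C \<subseteq> D \<and> y \<in> C \<and> z \<in> C \<and> C \<subseteq> ball y (c * (1/2)^n)"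
      by (rule compact_locally_connected_uniformly[OF assms(1,2)]) iprover
    then show ?thesis by blast
  qed
  then obtain \<delta>0 where \<delta>0: "\<And>n. 0 < \<delta>0 n" "\<And>n y z. \<lbrakk>y \<in> D; z \<in> D; dist y z < \<delta>0 n\<rbrakk> \<Longrightarrow>
      \<exists>C. connected C \<and> C \<subseteq> D \<and> y \<in> C \<and> z \<in> C \<and> C \<subseteq> ball y (c * (1/2)^n)"
    by metis
  define \<delta> where "\<delta> n = min (\<delta>0 n) (c * (1/2)^n)" for n
  have \<delta>: "\<And>n. 0 < \<delta> n" "\<And>n. \<delta> n \<le> c * (1/2)^n" using \<delta>0(1) \<open>0 < c\<close> by (simp_all add: \<delta>_def)
  have ulc: "\<And>n y z. \<lbrakk>y \<in> D; z \<in> D; dist y z < \<delta> n\<rbrakk> \<Longrightarrow>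
      \<exists>C. connected C \<and> C \<subseteq> D \<and> y \<in> C \<and> z \<in> C \<and> C \<subseteq> ball y (c * (1/2)^n)"
    using \<delta>0(2) by (simp add: \<delta>_def)
  show ?thesis
  proof (rule that)
    show "0 < \<delta> 0" by (rule \<delta>(1))
    fix x y assume xy: "x \<in> D" "y \<in> D" "dist x y < \<delta> 0"
    show "\<exists>\<gamma>. path \<gamma> \<and> path_image \<gamma> \<subseteq> D \<inter> cball x (3 * c) \<and> pathstart \<gamma> = x \<and> pathfinish \<gamma> = y"
    proof (rule refining_delta_chains[where \<delta> = \<delta> and \<epsilon> = "\<lambda>n. c * (1/2)^n", OF ulc \<delta>(1) _ xy])
      show "0 < c * (1/2::real)^n" for n using \<open>0 < c\<close> by simp
    next
      fix N H assume NH: "N 0 = 1" "\<And>n. 0 < N n" "\<And>n. delta_chain D (\<delta> n) (N n) (H n)"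
        "\<And>n. H n 0 = x" "\<And>n. H n (N n) = y"
        "\<And>n. \<exists>M>0. N (Suc n) = N n * M \<and> (\<forall>l\<le>N (Suc n). dist (H n (l div M)) (H (Suc n) l) < c * (1/2)^n)"
      show "\<exists>\<gamma>. path \<gamma> \<and> path_image \<gamma> \<subseteq> D \<inter> cball x (3 * c) \<and> pathstart \<gamma> = x \<and> pathfinish \<gamma> = y"
        by (rule refining_delta_chains_limit_path[OF compact_imp_complete[OF assms(1)] \<open>0 < c\<close> NH \<delta>])
    qed
  qed
qed

lemma compact_locally_connected_imp_locally_path_connected:
  fixes D :: "'a::metric_space set"
  assumes "compact D" "locally connected D"
  shows "locally path_connected D"
  unfolding locally_path_connected_im_kleinen
proof (intro allI impI)
  fix V x assume "openin (top_of_set D) V \<and> x \<in> V"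
  then obtain \<epsilon> where "0 < \<epsilon>" "ball x \<epsilon> \<inter> D \<subseteq> V" "V \<subseteq> D" "x \<in> V"
    unfolding openin_contains_ball by blast
  have "0 < \<epsilon>/4" using \<open>0 < \<epsilon>\<close> by simp
  then obtain d where "0 < d" and d: "\<And>x y. \<lbrakk>x \<in> D; y \<in> D; dist x y < d\<rbrakk> \<Longrightarrow>
      \<exists>\<gamma>. path \<gamma> \<and> path_image \<gamma> \<subseteq> D \<inter> cball x (3 * (\<epsilon>/4)) \<and> pathstart \<gamma> = x \<and> pathfinish \<gamma> = y"
    by (rule compact_locally_connected_short_paths[OF assms]) iprover
  have "D \<inter> cball x (3 * (\<epsilon>/4)) \<subseteq> V" using \<open>ball x \<epsilon> \<inter> D \<subseteq> V\<close> \<open>0 < \<epsilon>\<close> by auto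
  show "\<exists>U. openin (top_of_set D) U \<and> x \<in> U \<and> U \<subseteq> V \<and>
          (\<forall>y. y \<in> U \<longrightarrow> (\<exists>p. path p \<and> path_image p \<subseteq> V \<and> pathstart p = x \<and> pathfinish p = y))"
  proof (rule exI[of _ "D \<inter> ball x (min d \<epsilon>)"], intro conjI allI impI)
    show "openin (top_of_set D) (D \<inter> ball x (min d \<epsilon>))" by (simp add: openin_open_Int)
    show "x \<in> D \<inter> ball x (min d \<epsilon>)" using \<open>x \<in> V\<close> \<open>V \<subseteq> D\<close> \<open>0 < d\<close> \<open>0 < \<epsilon>\<close> by auto
    show "D \<inter> ball x (min d \<epsilon>) \<subseteq> V" using \<open>ball x \<epsilon> \<inter> D \<subseteq> V\<close> by auto
    fix y assume "y \<in> D \<inter> ball x (min d \<epsilon>)"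
    then have "y \<in> D" "dist x y < d" by auto
    then obtain \<gamma> where "path \<gamma>" "path_image \<gamma> \<subseteq> D \<inter> cball x (3 * (\<epsilon>/4))" "pathstart \<gamma> = x" "pathfinish \<gamma> = y"
      using d \<open>x \<in> V\<close> \<open>V \<subseteq> D\<close> by blast
    then show "\<exists>p. path p \<and> path_image p \<subseteq> V \<and> pathstart p = x \<and> pathfinish p = y"
      using \<open>D \<inter> cball x (3 * (\<epsilon>/4)) \<subseteq> V\<close> by blast
  qed
qed

lemma compact_locally_connected_openin_path_connected:
  fixes D :: "'a::metric_space set"
  assumes "compact D" "locally connected D" "openin (top_of_set D) W" "connected W"
  shows "path_connected W"
proof -
  have lpc: "locally path_connected W"
    using locally_open_subset[OF compact_locally_connected_imp_locally_path_connected[OF assms(1,2)] assms(3)] .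
  show ?thesis
    unfolding path_connected_component_set
    using path_component_eq_connected_component_set[OF lpc] connected_component_eq_self[OF assms(4)] by simp
qed

text \<open>Kuratowski's isometric embedding of a metric space into the Banach space of bounded
  continuous real functions on it; it transfers the arc-extraction theorem, which the library
  states for Banach spaces only.\<close>
definition kuratowski_embedding :: "'a::metric_space \<Rightarrow> 'a \<Rightarrow> ('a \<Rightarrow>\<^sub>C real)" where
  "kuratowski_embedding x0 x = Bcontfun (\<lambda>y. dist x y - dist x0 y)"

lemma kuratowski_embedding_apply:
  "apply_bcontfun (kuratowski_embedding x0 x) = (\<lambda>y. dist x y - dist x0 y)"
proof -
  have "(\<lambda>y. dist x y - dist x0 y) \<in> bcontfun"
  proof (rule bcontfun_normI)
    show "continuous_on UNIV (\<lambda>y. dist x y - dist x0 y)" by (intro continuous_intros)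
    show "norm (dist x y - dist x0 y) \<le> dist x x0" for y
      using dist_triangle[of x y x0] dist_triangle[of x0 y x] by (simp add: dist_commute abs_le_iff)
  qed
  then show ?thesis by (simp add: kuratowski_embedding_def Bcontfun_inverse)
qed

lemma dist_kuratowski_embedding:
  "dist (kuratowski_embedding x0 x) (kuratowski_embedding x0 x') = dist x x'"
proof (rule antisym)
  show "dist (kuratowski_embedding x0 x) (kuratowski_embedding x0 x') \<le> dist x x'"
  proof (rule dist_bound)
    fix y
    show "dist (apply_bcontfun (kuratowski_embedding x0 x) y) (apply_bcontfun (kuratowski_embedding x0 x') y)
        \<le> dist x x'"
      using dist_triangle[of x y x'] dist_triangle[of x' y x]
      by (simp add: kuratowski_embedding_apply dist_real_def dist_commute abs_le_iff)
  qed
  have "dist (apply_bcontfun (kuratowski_embedding x0 x) x') (apply_bcontfun (kuratowski_embedding x0 x') x')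
      \<le> dist (kuratowski_embedding x0 x) (kuratowski_embedding x0 x')"
    by (rule dist_bounded)
  then show "dist x x' \<le> dist (kuratowski_embedding x0 x) (kuratowski_embedding x0 x')"
    by (simp add: kuratowski_embedding_apply dist_real_def)
qed

lemma path_contains_arc_metric:
  fixes p :: "real \<Rightarrow> 'a::metric_space"
  assumes "path p" "pathstart p = a" "pathfinish p = b" "a \<noteq> b"
  obtains q where "arc q" "path_image q \<subseteq> path_image p" "pathstart q = a" "pathfinish q = b"
proof -
  define e where "e = kuratowski_embedding a"
  have cont: "continuous_on S e" for S
    unfolding continuous_on_iff e_def dist_kuratowski_embedding by blast
  have "inj e"
    by (rule injI) (metis dist_eq_0_iff dist_kuratowski_embedding e_def)
  then have "inj_on e (path_image p)" by (rule inj_on_subset) simp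
  then obtain e' where e': "homeomorphism (path_image p) (e ` path_image p) e e'"
    using homeomorphism_compact[OF compact_path_image[OF assms(1)] cont] by blast
  have "path (e \<circ> p)"
    using assms(1) cont unfolding path_def by (rule continuous_on_compose)
  moreover have "e a \<noteq> e b" using \<open>inj e\<close> \<open>a \<noteq> b\<close> by (auto dest: injD)
  ultimately obtain q' where q': "arc q'" "path_image q' \<subseteq> e ` path_image p"
    "pathstart q' = e a" "pathfinish q' = e b"
    using path_contains_arc[of "e \<circ> p" "e a" "e b"] assms(2,3)
    by (auto simp: path_image_compose pathstart_compose pathfinish_compose)
  have inv: "\<And>x. x \<in> path_image p \<Longrightarrow> e' (e x) = x" "\<And>y. y \<in> e ` path_image p \<Longrightarrow> e (e' y) = y"
    "continuous_on (e ` path_image p) e'"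
    using e' unfolding homeomorphism_def by auto
  show ?thesis
  proof
    have "path (e' \<circ> q')"
      using q'(1,2) inv(3) unfolding arc_def path_def path_image_def
      by (intro continuous_on_compose) (auto intro: continuous_on_subset)
    moreover have "inj_on (e' \<circ> q') {0..1}"
    proof (rule inj_onI)
      fix s t assume "s \<in> {0..1}" "t \<in> {0..1}" "(e' \<circ> q') s = (e' \<circ> q') t"
      then have "q' s = q' t" using inv(2) q'(2) by (metis comp_apply image_subset_iff path_image_def)
      then show "s = t" using q'(1) \<open>s \<in> {0..1}\<close> \<open>t \<in> {0..1}\<close> by (auto simp: arc_def dest: inj_onD)
    qed
    ultimately show "arc (e' \<circ> q')" by (simp add: arc_def)
    show "path_image (e' \<circ> q') \<subseteq> path_image p"
      using q'(2) inv(1) by (auto simp: path_image_compose)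
    show "pathstart (e' \<circ> q') = a" "pathfinish (e' \<circ> q') = b"
      using q'(3,4) inv(1) assms pathstart_in_path_image pathfinish_in_path_image
      by (force simp: pathstart_compose pathfinish_compose)+
  qed
qed

lemma compact_locally_connected_openin_arc:
  fixes D :: "'a::metric_space set"
  assumes "compact D" "locally connected D" "openin (top_of_set D) W" "connected W"
    and "a \<in> W" "b \<in> W" "a \<noteq> b"
  obtains g where "arc g" "path_image g \<subseteq> W" "pathstart g = a" "pathfinish g = b"
proof -
  have "path_connected W" by (rule compact_locally_connected_openin_path_connected[OF assms(1-4)])
  then obtain p where p: "path p" "path_image p \<subseteq> W" "pathstart p = a" "pathfinish p = b"
    using assms(5,6) unfolding path_connected_def by blast
  obtain g where g: "arc g" "path_image g \<subseteq> path_image p" "pathstart g = a" "pathfinish g = b"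
    using path_contains_arc_metric[OF p(1,3,4) \<open>a \<noteq> b\<close>] .
  show ?thesis
    using g p(2) by (intro that[of g]) auto
qed

section \<open>Arcs in dendrites\<close>

lemma openin_connected_component_delete:
  fixes D :: "'a::metric_space set"
  assumes "locally connected D"
  shows "openin (top_of_set D) (connected_component_set (D - {x}) z)"
proof -
  have "openin (top_of_set D) (D - {x})" by (simp add: openin_delete)
  moreover have "locally connected (D - {x})" by (rule locally_open_subset[OF assms calculation])
  ultimately show ?thesis
    using openin_connected_component_locally_connected openin_trans by blast
qed

lemma connected_insert_connected_component_delete:
  fixes D :: "'a::metric_space set"
  assumes "connected D" "locally connected D" "x \<in> D"
  shows "connected (insert x (connected_component_set (D - {x}) z))"
proof (cases "connected_component_set (D - {x}) z = {}")
  case False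
  define E where "E = connected_component_set (D - {x}) z"
  have "E \<subseteq> D - {x}" by (simp add: E_def connected_component_subset)
  have "x \<in> closure E"
  proof (rule ccontr)
    assume "x \<notin> closure E"
    obtain F where "closed F" "E = (D - {x}) \<inter> F"
      using closedin_connected_component[of "D - {x}" z] by (auto simp: E_def closedin_closed)
    then have "closure E \<subseteq> F" by (simp add: closure_minimal)
    then have "E = D \<inter> closure E"
      using \<open>x \<notin> closure E\<close> \<open>E = (D - {x}) \<inter> F\<close> closure_subset[of E] by blast
    moreover have "closedin (top_of_set D) (D \<inter> closure E)" by (simp add: closedin_closed_Int)
    ultimately have "closedin (top_of_set D) E" by simp
    moreover have "openin (top_of_set D) E"
      unfolding E_def by (rule openin_connected_component_delete[OF assms(2)])
    ultimately have "E = {} \<or> E = D" using assms(1) unfolding connected_clopen by blast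
    then show False using False \<open>E \<subseteq> D - {x}\<close> \<open>x \<in> D\<close> by (auto simp: E_def)
  qed
  have "connected E" by (simp add: E_def)
  moreover have "E \<subseteq> insert x E" by blast
  moreover have "insert x E \<subseteq> closure E" using \<open>x \<in> closure E\<close> closure_subset by blast
  ultimately have "connected (insert x E)" by (rule connected_intermediate_closure)
  then show ?thesis by (simp add: E_def)
next
  case True
  then have eq: "insert x (connected_component_set (D - {x}) z) = {x}" by blast
  show ?thesis unfolding eq by simp
qed

text \<open>The library's subpath requires a normed codomain.\<close>
definition metric_subpath :: "real \<Rightarrow> real \<Rightarrow> (real \<Rightarrow> 'a) \<Rightarrow> real \<Rightarrow> 'a" where
  "metric_subpath u v g = (\<lambda>x. g ((v - u) * x + u))"

lemma pathstart_metric_subpath [simp]: "pathstart (metric_subpath u v g) = g u"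
  and pathfinish_metric_subpath [simp]: "pathfinish (metric_subpath u v g) = g v"
  by (simp_all add: metric_subpath_def pathstart_def pathfinish_def)

lemma affine_between:
  fixes u v x :: real
  assumes "x \<in> {0..1}"
  shows "(v - u) * x + u \<in> {min u v..max u v}"
proof (cases "u \<le> v")
  case True
  have "0 \<le> (v - u) * x" "(v - u) * x \<le> v - u"
    using mult_left_mono[of x 1 "v - u"] True assms by simp_all
  then have "u \<le> (v - u) * x + u" "(v - u) * x + u \<le> v" by linarith+
  then show ?thesis using True by simp
next
  case False
  have "0 \<le> (u - v) * x" "(u - v) * x \<le> u - v"
    using mult_left_mono[of x 1 "u - v"] False assms by simp_all
  moreover have "(v - u) * x = - ((u - v) * x)" by (simp add: algebra_simps)
  ultimately have "v \<le> (v - u) * x + u" "(v - u) * x + u \<le> u" by linarith+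
  then show ?thesis using False by simp
qed

lemma path_image_metric_subpath_subset:
  "path_image (metric_subpath u v g) \<subseteq> g ` {min u v..max u v}"
  using affine_between by (force simp: path_image_def metric_subpath_def)

lemma arc_metric_subpath:
  assumes "arc g" "u \<in> {0..1}" "v \<in> {0..1}" "u \<noteq> v"
  shows "arc (metric_subpath u v g)"
proof -
  have "(v - u) * x + u \<in> {0..1}" if "x \<in> {0..1}" for x
    using affine_between[OF that, of v u] assms(2,3) by (auto simp: min_def max_def split: if_splits)
  then have sub: "(\<lambda>x. (v - u) * x + u) ` {0..1} \<subseteq> {0..1}" by blast
  have "continuous_on {0..1} (g \<circ> (\<lambda>x. (v - u) * x + u))"
  proof (rule continuous_on_compose)
    show "continuous_on {0..1} (\<lambda>x. (v - u) * x + u)" by (intro continuous_intros)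
    show "continuous_on ((\<lambda>x. (v - u) * x + u) ` {0..1}) g"
      using assms(1) sub by (auto simp: arc_def path_def intro: continuous_on_subset)
  qed
  moreover have "inj_on (g \<circ> (\<lambda>x. (v - u) * x + u)) {0..1}"
  proof (rule comp_inj_on)
    show "inj_on (\<lambda>x. (v - u) * x + u) {0..1}" using \<open>u \<noteq> v\<close> by (auto intro: inj_onI)
    show "inj_on g ((\<lambda>x. (v - u) * x + u) ` {0..1})"
      using assms(1) sub by (auto simp: arc_def intro: inj_on_subset)
  qed
  ultimately show ?thesis by (simp add: arc_def path_def metric_subpath_def o_def)
qed

lemma path_excursion_from_closed:
  fixes g :: "real \<Rightarrow> 'a::topological_space"
  assumes "continuous_on {0..1} g" "closed K" "g 0 \<in> K" "g 1 \<in> K" "t0 \<in> {0..1}" "g t0 \<notin> K"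
  obtains a b where "0 \<le> a" "a < t0" "t0 < b" "b \<le> 1" "g a \<in> K" "g b \<in> K"
    "\<And>s. \<lbrakk>a < s; s < b\<rbrakk> \<Longrightarrow> g s \<notin> K"
proof -
  define S where "S = {0..1} \<inter> g -` K"
  have "closed S"
    unfolding S_def by (rule continuous_closed_preimage[OF assms(1) closed_atLeastAtMost assms(2)])
  define a where "a = Sup (S \<inter> {0..t0})"
  define b where "b = Inf (S \<inter> {t0..1})"
  have "0 \<in> S \<inter> {0..t0}" "1 \<in> S \<inter> {t0..1}" using assms(3-5) by (auto simp: S_def)
  moreover have "bdd_above (S \<inter> {0..t0})" "bdd_below (S \<inter> {t0..1})" by auto
  moreover have "closed (S \<inter> {0..t0})" "closed (S \<inter> {t0..1})" using \<open>closed S\<close> by auto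
  ultimately have a: "a \<in> S \<inter> {0..t0}" and b: "b \<in> S \<inter> {t0..1}"
    unfolding a_def b_def by (metis closed_contains_Sup empty_iff, metis closed_contains_Inf empty_iff)
  have "a \<noteq> t0" "b \<noteq> t0" using a b assms(6) by (auto simp: S_def)
  show ?thesis
  proof
    show "0 \<le> a" "a < t0" "t0 < b" "b \<le> 1" using a b \<open>a \<noteq> t0\<close> \<open>b \<noteq> t0\<close> by auto
    show "g a \<in> K" "g b \<in> K" using a b by (auto simp: S_def)
    fix s assume "a < s" "s < b"
    show "g s \<notin> K"
    proof
      assume "g s \<in> K"
      show False
      proof (cases "s \<le> t0")
        case True
        then have "s \<in> S \<inter> {0..t0}" using \<open>g s \<in> K\<close> \<open>a < s\<close> a assms(5) by (auto simp: S_def)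
        then have "s \<le> a" unfolding a_def by (auto intro: cSup_upper)
        then show False using \<open>a < s\<close> by simp
      next
        case False
        then have "s \<in> S \<inter> {t0..1}" using \<open>g s \<in> K\<close> \<open>s < b\<close> b assms(5) by (auto simp: S_def)
        then have "b \<le> s" unfolding b_def by (auto intro: cInf_lower)
        then show False using \<open>s < b\<close> by simp
      qed
    qed
  qed
qed

text \<open>The loop follows g along an excursion off the image of h and returns along h.\<close>
lemma simple_loop_from_arcs:
  fixes g h :: "real \<Rightarrow> 'a::metric_space"
  assumes g: "arc g" and h: "arc h" and ends: "pathstart h = pathstart g" "pathfinish h = pathfinish g"
    and t0: "t0 \<in> {0..1}" "g t0 \<notin> path_image h"
  obtains c where "simple_path c" "pathfinish c = pathstart c" "path_image c \<subseteq> path_image g \<union> path_image h"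
proof -
  have "g 0 \<in> path_image h" "g 1 \<in> path_image h"
    using ends pathstart_in_path_image pathfinish_in_path_image by (metis pathstart_def pathfinish_def)+
  moreover have "closed (path_image h)" by (simp add: arc_imp_path closed_path_image h)
  moreover have "continuous_on {0..1} g" using g by (simp add: arc_def path_def)
  ultimately obtain a b where ab: "0 \<le> a" "a < t0" "t0 < b" "b \<le> 1" "g a \<in> path_image h" "g b \<in> path_image h"
    "\<And>s. \<lbrakk>a < s; s < b\<rbrakk> \<Longrightarrow> g s \<notin> path_image h"
    using path_excursion_from_closed[of g "path_image h" t0] t0 by blast
  obtain a' b' where a'b': "a' \<in> {0..1}" "h a' = g a" "b' \<in> {0..1}" "h b' = g b"
    using ab(5,6) by (auto simp: path_image_def)
  have "g a \<noteq> g b"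
    using g ab(1-4) by (auto simp: arc_def dest: inj_onD)
  then have "a' \<noteq> b'" using a'b' by auto
  define c1 c2 where "c1 = metric_subpath a b g" and "c2 = metric_subpath b' a' h"
  have arcs: "arc c1" "arc c2"
    using ab(1-4) a'b'(1,3) \<open>a' \<noteq> b'\<close> by (auto simp: c1_def c2_def intro!: arc_metric_subpath g h)
  have im1: "path_image c1 \<subseteq> g ` {a..b}"
    using path_image_metric_subpath_subset[of a b g] ab by (simp add: c1_def)
  have im2: "path_image c2 \<subseteq> path_image h"
    using path_image_metric_subpath_subset[of b' a' h] a'b'(1,3) by (force simp: c2_def path_image_def)
  have "path_image c1 \<inter> path_image c2 \<subseteq> {pathstart c1, pathstart c2}"
  proof
    fix z assume z: "z \<in> path_image c1 \<inter> path_image c2"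
    then obtain s where "s \<in> {a..b}" "z = g s" using im1 by blast
    then have "s = a \<or> s = b" using ab(7)[of s] z im2 by force
    then show "z \<in> {pathstart c1, pathstart c2}" using \<open>z = g s\<close> a'b' by (auto simp: c1_def c2_def)
  qed
  then have "simple_path (c1 +++ c2)"
    using a'b' arcs by (intro simple_path_join_loop) (auto simp: c1_def c2_def)
  moreover have "path_image c1 \<subseteq> path_image g"
    using im1 ab(1-4) by (auto simp: path_image_def)
  then have "path_image (c1 +++ c2) \<subseteq> path_image g \<union> path_image h"
    using im2 a'b'(4) by (subst path_image_join) (auto simp: c1_def c2_def)
  ultimately show ?thesis using that a'b' by (simp add: c1_def c2_def)
qed

lemma arc_image_subset_connected_component:
  assumes "arc g" "path_image g \<subseteq> S" "0 \<le> u" "v \<le> 1" "t \<in> {0..1} - {u..v}" "w \<in> {u..v}"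
  shows "g ` {u..v} \<subseteq> connected_component_set (S - {g t}) (g w)"
proof (rule connected_component_maximal)
  show "g w \<in> g ` {u..v}" using assms(6) by blast
  have "continuous_on {0..1} g" using assms(1) by (simp add: arc_def path_def)
  then show "connected (g ` {u..v})"
    using assms(3,4) by (intro connected_continuous_image) (auto intro: continuous_on_subset)
  have "g s \<noteq> g t" if "s \<in> {u..v}" for s
    using assms(1,3-5) that by (auto simp: arc_def dest: inj_onD)
  then show "g ` {u..v} \<subseteq> S - {g t}"
    using assms(2-4) by (auto simp: path_image_def)
qed

lemma dendrite_arc_separates:
  fixes D :: "'a::metric_space set"
  assumes D: "dendrite D" and g: "arc g" "path_image g \<subseteq> D" and t: "t \<in> {0<..<1}"
  shows "connected_component_set (D - {g t}) (g 0) \<inter> connected_component_set (D - {g t}) (g 1) = {}"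
proof (rule ccontr)
  assume "connected_component_set (D - {g t}) (g 0) \<inter> connected_component_set (D - {g t}) (g 1) \<noteq> {}"
  then have "connected_component (D - {g t}) (g 1) (g 0)"
    using connected_component_disjoint[of "D - {g t}" "g 0" "g 1"] by blast
  then have "connected_component (D - {g t}) (g 0) (g 1)" by (rule connected_component_sym)
  define U where "U = connected_component_set (D - {g t}) (g 0)"
  have "g 1 \<in> U" "g 0 \<in> D - {g t}"
    using \<open>connected_component (D - {g t}) (g 0) (g 1)\<close> connected_component_in by (auto simp: U_def)
  then have "g 0 \<in> U" by (simp add: U_def connected_component_refl)
  have "g 0 \<noteq> g 1" using g(1) by (auto simp: arc_def dest: inj_onD)
  moreover have "openin (top_of_set D) U"
    unfolding U_def by (rule openin_connected_component_delete) (use D in \<open>simp add: dendrite_def\<close>)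
  ultimately obtain h where h: "arc h" "path_image h \<subseteq> U" "pathstart h = g 0" "pathfinish h = g 1"
    using compact_locally_connected_openin_arc[of D U "g 0" "g 1"] D \<open>g 0 \<in> U\<close> \<open>g 1 \<in> U\<close>
    by (auto simp: dendrite_def U_def)
  moreover have "U \<subseteq> D - {g t}" by (simp add: U_def connected_component_subset)
  ultimately have "g t \<notin> path_image h" "path_image h \<subseteq> D" by blast+
  have ends: "pathstart h = pathstart g" "pathfinish h = pathfinish g"
    using h(3,4) by (simp_all add: pathstart_def pathfinish_def)
  have "t \<in> {0..1}" using t by simp
  show False
  proof (rule simple_loop_from_arcs[OF g(1) h(1) ends \<open>t \<in> {0..1}\<close> \<open>g t \<notin> path_image h\<close>])
    fix c assume c: "simple_path c" "pathfinish c = pathstart c" "path_image c \<subseteq> path_image g \<union> path_image h"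
    then have "path_image c \<subseteq> D" using g(2) \<open>path_image h \<subseteq> D\<close> by blast
    then show False using D c(1,2) unfolding dendrite_def by blast
  qed
qed

lemma dendrite_arc_interior_cutpoint:
  fixes D :: "'a::metric_space set"
  assumes "dendrite D" "arc g" "path_image g \<subseteq> D" "t \<in> {0<..<1}"
  shows "cutpoint D (g t)"
proof -
  have "g 0 \<noteq> g t" "g 1 \<noteq> g t" "g 0 \<in> D" "g 1 \<in> D" "g t \<in> D"
    using assms(2-4) by (auto simp: arc_def path_image_def dest: inj_onD)
  have "\<not> connected (D - {g t})"
  proof
    assume "connected (D - {g t})"
    then have "connected_component_set (D - {g t}) (g 0) = D - {g t}"
      "connected_component_set (D - {g t}) (g 1) = D - {g t}"
      using \<open>g 0 \<noteq> g t\<close> \<open>g 1 \<noteq> g t\<close> \<open>g 0 \<in> D\<close> \<open>g 1 \<in> D\<close> by (simp_all add: connected_component_eq_self)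
    then show False using dendrite_arc_separates[OF assms] \<open>g 0 \<noteq> g t\<close> \<open>g 0 \<in> D\<close> by auto
  qed
  then show ?thesis using \<open>g t \<in> D\<close> by (simp add: cutpoint_def)
qed

section \<open>Fixed points on arcs\<close>

lemma continuous_on_openin_preimage_near:
  fixes \<phi> :: "'a::metric_space \<Rightarrow> 'b::metric_space"
  assumes "continuous_on S \<phi>" "\<phi> ` S \<subseteq> T" "openin (top_of_set T) E" "t \<in> S" "\<phi> t \<in> E"
  obtains \<delta> where "0 < \<delta>" "\<And>s. \<lbrakk>s \<in> S; dist s t < \<delta>\<rbrakk> \<Longrightarrow> \<phi> s \<in> E"
proof -
  obtain r where "0 < r" and r: "ball (\<phi> t) r \<inter> T \<subseteq> E"
    using assms(3,5) unfolding openin_contains_ball by blast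
  obtain \<delta> where "0 < \<delta>" and \<delta>: "\<And>s. \<lbrakk>s \<in> S; dist s t < \<delta>\<rbrakk> \<Longrightarrow> dist (\<phi> s) (\<phi> t) < r"
    using assms(1,4) \<open>0 < r\<close> unfolding continuous_on_iff by blast
  show ?thesis
  proof (rule that[OF \<open>0 < \<delta>\<close>])
    fix s assume "s \<in> S" "dist s t < \<delta>"
    then have "\<phi> s \<in> ball (\<phi> t) r \<inter> T" using \<delta> assms(2) by (auto simp: dist_commute)
    then show "\<phi> s \<in> E" using r by blast
  qed
qed

text \<open>A point of the arc just after t1 separates g 0 from the whole component of D - {g t1} containing
  f (g t1), and by continuity that component also contains the image of the point.\<close>
lemma arc_push_to_start_component:
  fixes D :: "'a::metric_space set"
  assumes D: "connected D" "locally connected D" and g: "arc g" "path_image g \<subseteq> D"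
    and f: "continuous_on D f" "f ` D \<subseteq> D"
    and t1: "t1 \<in> {0<..<1}" "f (g t1) \<noteq> g t1" "f (g t1) \<notin> connected_component_set (D - {g t1}) (g 1)"
  obtains \<epsilon> where "0 < \<epsilon>"
    "\<And>t. \<lbrakk>t1 < t; t < t1 + \<epsilon>\<rbrakk> \<Longrightarrow> f (g t) \<in> connected_component_set (D - {g t}) (g 0)"
proof -
  define x1 where "x1 = g t1"
  define E where "E = connected_component_set (D - {x1}) (f x1)"
  have "x1 \<in> D" using g t1(1) by (auto simp: x1_def path_image_def)
  then have "f x1 \<in> E" using f(2) t1(2) by (auto simp: E_def x1_def)
  have "openin (top_of_set D) E" unfolding E_def by (rule openin_connected_component_delete[OF D(2)])
  have "continuous_on (g ` {0..1}) f" using f(1) g(2) by (auto simp: path_image_def intro: continuous_on_subset)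
  then have "continuous_on {0..1} (f \<circ> g)"
    using g(1) by (intro continuous_on_compose) (auto simp: arc_def path_def)
  moreover have "(f \<circ> g) ` {0..1} \<subseteq> D" using f(2) g(2) by (auto simp: path_image_def)
  ultimately obtain \<delta> where "0 < \<delta>" and \<delta>: "\<And>t. \<lbrakk>t \<in> {0..1}; dist t t1 < \<delta>\<rbrakk> \<Longrightarrow> f (g t) \<in> E"
    using continuous_on_openin_preimage_near[OF _ _ \<open>openin (top_of_set D) E\<close>, of "{0..1}" "f \<circ> g" t1]
      t1(1) \<open>f x1 \<in> E\<close> by (auto simp: x1_def)
  show ?thesis
  proof
    show "0 < min \<delta> (1 - t1)" using \<open>0 < \<delta>\<close> t1(1) by simp
    fix t assume t: "t1 < t" "t < t1 + min \<delta> (1 - t1)"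
    then have "t \<in> {0..1}" "dist t t1 < \<delta>" using t1(1) by (auto simp: dist_real_def)
    then have "f (g t) \<in> E" by (rule \<delta>)
    have "g ` {t..1} \<subseteq> connected_component_set (D - {x1}) (g 1)"
      using arc_image_subset_connected_component[OF g, of t 1 t1 1] \<open>t \<in> {0..1}\<close> t t1(1)
      by (auto simp: x1_def)
    then have "g t \<in> connected_component_set (D - {x1}) (g 1)"
      by (rule subsetD) (use \<open>t \<in> {0..1}\<close> in auto)
    then have "g t \<notin> E"
      using t1(3) connected_component_disjoint[of "D - {x1}" "f x1" "g 1"] by (auto simp: E_def x1_def)
    have "g ` {0..t1} \<subseteq> connected_component_set (D - {g t}) (g 0)"
      using arc_image_subset_connected_component[OF g, of 0 t1 t 0] \<open>t \<in> {0..1}\<close> t t1(1) by auto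
    then have "x1 \<in> connected_component_set (D - {g t}) (g 0)"
      unfolding x1_def by (rule subsetD) (use t1(1) in auto)
    moreover have "insert x1 E \<subseteq> D - {g t}"
      using \<open>g t \<notin> E\<close> \<open>x1 \<in> D\<close> calculation connected_component_subset[of "D - {x1}" "f x1"]
      by (auto simp: E_def dest: connected_component_in)
    moreover have "connected (insert x1 E)"
      unfolding E_def by (rule connected_insert_connected_component_delete[OF D \<open>x1 \<in> D\<close>])
    ultimately have "insert x1 E \<subseteq> connected_component_set (D - {g t}) (g 0)"
      by (metis connected_component_eq connected_component_maximal insertI1)
    then show "f (g t) \<in> connected_component_set (D - {g t}) (g 0)" using \<open>f (g t) \<in> E\<close> by blast
  qed
qed

lemma arc_push_to_end_component:
  fixes D :: "'a::metric_space set"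
  assumes D: "connected D" "locally connected D" and g: "arc g" "path_image g \<subseteq> D"
    and f: "continuous_on D f" "f ` D \<subseteq> D"
    and t1: "t1 \<in> {0<..<1}" "f (g t1) \<noteq> g t1" "f (g t1) \<notin> connected_component_set (D - {g t1}) (g 0)"
  obtains \<epsilon> where "0 < \<epsilon>"
    "\<And>t. \<lbrakk>t1 - \<epsilon> < t; t < t1\<rbrakk> \<Longrightarrow> f (g t) \<in> connected_component_set (D - {g t}) (g 1)"
proof -
  have rt1: "1 - t1 \<in> {0<..<1}" "f (reversepath g (1 - t1)) \<noteq> reversepath g (1 - t1)"
    "f (reversepath g (1 - t1)) \<notin> connected_component_set (D - {reversepath g (1 - t1)}) (reversepath g 1)"
    using t1 by (simp_all add: reversepath_def)
  have "path_image (reversepath g) \<subseteq> D" using g(2) by simp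
  show ?thesis
  proof (rule arc_push_to_start_component[OF D arc_reversepath[OF g(1)] \<open>path_image (reversepath g) \<subseteq> D\<close> f rt1])
    fix \<epsilon> :: real assume "0 < \<epsilon>" and \<epsilon>: "\<And>t. \<lbrakk>1 - t1 < t; t < 1 - t1 + \<epsilon>\<rbrakk> \<Longrightarrow>
      f (reversepath g t) \<in> connected_component_set (D - {reversepath g t}) (reversepath g 0)"
    show thesis
    proof (rule that[OF \<open>0 < \<epsilon>\<close>])
      fix t assume "t1 - \<epsilon> < t" "t < t1"
      then show "f (g t) \<in> connected_component_set (D - {g t}) (g 1)"
        using \<epsilon>[of "1 - t"] by (simp add: reversepath_def)
    qed
  qed
qed

definition moves_toward_start :: "'a::metric_space set \<Rightarrow> ('a \<Rightarrow> 'a) \<Rightarrow> (real \<Rightarrow> 'a) \<Rightarrow> bool" where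
  "moves_toward_start D f g \<longleftrightarrow>
     (\<exists>d>0. \<forall>t\<in>{0<..<d}. f (g t) \<noteq> g t \<longrightarrow> f (g t) \<in> connected_component_set (D - {g t}) (g 0))"

lemma not_weakly_repelling_imp_moves_toward_start:
  fixes D :: "'a::metric_space set"
  assumes "\<not> weakly_repelling D f p (D - {p})" "dendrite D" "f ` D \<subseteq> D"
    and g: "arc g" "path_image g \<subseteq> D" "pathstart g = p"
  shows "moves_toward_start D f g"
proof -
  have "\<not> (\<forall>e>0. \<exists>x\<in>D - {p}. dist x p < e \<and> cutpoint D x \<and> separates D x p (f x))"
    using assms(1) unfolding weakly_repelling_def by blast
  then obtain e where "0 < e"
    and e: "\<And>x. \<lbrakk>x \<in> D - {p}; dist x p < e; cutpoint D x\<rbrakk> \<Longrightarrow> \<not> separates D x p (f x)"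
    by blast
  have "g 0 = p" using g(3) by (simp add: pathstart_def)
  moreover have "continuous_on {0..1} g" using g(1) by (simp add: arc_def path_def)
  ultimately obtain d where "0 < d" and d: "\<And>t. \<lbrakk>t \<in> {0..1}; dist t 0 < d\<rbrakk> \<Longrightarrow> dist (g t) p < e"
    using \<open>0 < e\<close> unfolding continuous_on_iff by (metis atLeastAtMost_iff order_refl zero_le_one)
  have "f (g t) \<in> connected_component_set (D - {g t}) (g 0)"
    if t: "t \<in> {0<..<min d 1}" and moved: "f (g t) \<noteq> g t" for t
  proof -
    have "g t \<in> D" "g 0 \<in> D" using g(2) t by (auto simp: path_image_def)
    have "g t \<noteq> g 0"
    proof
      assume "g t = g 0"
      then have "t = 0" using g(1) t by (auto simp: arc_def dest: inj_onD)
      then show False using t by simp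
    qed
    have "dist (g t) p < e" using d[of t] t by (simp add: dist_real_def)
    moreover have "cutpoint D (g t)" using dendrite_arc_interior_cutpoint[OF assms(2) g(1,2)] t by simp
    ultimately have "\<not> separates D (g t) (g 0) (f (g t))"
      using e \<open>g t \<in> D\<close> \<open>g t \<noteq> g 0\<close> \<open>g 0 = p\<close> by blast
    moreover have "f (g t) \<in> D - {g t}" using assms(3) \<open>g t \<in> D\<close> moved by blast
    ultimately have "connected_component_set (D - {g t}) (f (g t)) = connected_component_set (D - {g t}) (g 0)"
      using \<open>g 0 \<in> D\<close> \<open>g t \<noteq> g 0\<close> by (auto simp: separates_def)
    then show ?thesis using \<open>f (g t) \<in> D - {g t}\<close> by (metis connected_component_refl mem_Collect_eq)
  qed
  then show ?thesis unfolding moves_toward_start_def using \<open>0 < d\<close> by (intro exI[of _ "min d 1"]) auto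
qed

lemma real_interval_persistence:
  fixes A :: "real set"
  assumes "s \<in> A" "s \<le> t"
    and right: "\<And>u. \<lbrakk>u \<in> A; s \<le> u; u < t\<rbrakk> \<Longrightarrow> \<exists>\<epsilon>>0. \<forall>v. u < v \<and> v < u + \<epsilon> \<longrightarrow> v \<in> A"
    and left: "\<And>u. \<lbrakk>u \<notin> A; s < u; u \<le> t\<rbrakk> \<Longrightarrow> \<exists>\<epsilon>>0. \<forall>v. u - \<epsilon> < v \<and> v < u \<longrightarrow> v \<notin> A"
  shows "t \<in> A"
proof (rule ccontr)
  assume "t \<notin> A"
  define T where "T = {u \<in> {s..t}. u \<notin> A}"
  define a where "a = Inf T"
  have "t \<in> T" using \<open>t \<notin> A\<close> \<open>s \<le> t\<close> by (simp add: T_def)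
  have "bdd_below T" by (auto simp: T_def bdd_below_def)
  have "s \<le> a" "a \<le> t"
    using \<open>t \<in> T\<close> \<open>bdd_below T\<close> unfolding a_def by (auto simp: T_def intro: cInf_greatest cInf_lower)
  have below: "u \<in> A" if "s \<le> u" "u < a" for u
    using that cInf_lower[OF _ \<open>bdd_below T\<close>, of u] \<open>a \<le> t\<close> by (force simp: T_def a_def)
  show False
  proof (cases "a \<in> A")
    case True
    then have "a < t" using \<open>a \<le> t\<close> \<open>t \<notin> A\<close> by (cases "a = t") auto
    then obtain \<epsilon> where "0 < \<epsilon>" and \<epsilon>: "\<And>v. \<lbrakk>a < v; v < a + \<epsilon>\<rbrakk> \<Longrightarrow> v \<in> A"
      using right[OF True \<open>s \<le> a\<close>] by blast
    have "min (a + \<epsilon>) t \<le> u" if "u \<in> T" for u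
    proof -
      have "a \<le> u" "u \<notin> A" "u \<le> t" using that cInf_lower[OF that \<open>bdd_below T\<close>] by (auto simp: T_def a_def)
      then show ?thesis using \<epsilon>[of u] True by (cases "u = a") force+
    qed
    then have "min (a + \<epsilon>) t \<le> a" unfolding a_def using \<open>t \<in> T\<close> by (intro cInf_greatest) auto
    then show False using \<open>0 < \<epsilon>\<close> \<open>a < t\<close> by simp
  next
    case False
    then have "s < a" using \<open>s \<le> a\<close> \<open>s \<in> A\<close> by (cases "s = a") auto
    then obtain \<epsilon> where "0 < \<epsilon>" and \<epsilon>: "\<And>v. \<lbrakk>a - \<epsilon> < v; v < a\<rbrakk> \<Longrightarrow> v \<notin> A"
      using left[OF False _ \<open>a \<le> t\<close>] by blast
    define v where "v = max s (a - \<epsilon>/2)"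
    have "s \<le> v" "v < a" "a - \<epsilon> < v" using \<open>s < a\<close> \<open>0 < \<epsilon>\<close> by (auto simp: v_def)
    then show False using below \<epsilon> by blast
  qed
qed

lemma dendrite_arc_fixed_point:
  fixes D :: "'a::metric_space set"
  assumes D: "dendrite D" and g: "arc g" "path_image g \<subseteq> D" and f: "continuous_on D f" "f ` D \<subseteq> D"
    and start: "moves_toward_start D f g" and finish: "moves_toward_start D f (reversepath g)"
  shows "\<exists>t\<in>{0<..<1}. f (g t) = g t"
proof (rule ccontr)
  assume "\<not> ?thesis"
  then have moved: "\<And>t. t \<in> {0<..<1} \<Longrightarrow> f (g t) \<noteq> g t" by blast
  have D': "connected D" "locally connected D" using D by (auto simp: dendrite_def)
  define P Q where "P t = connected_component_set (D - {g t}) (g 0)"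
    and "Q t = connected_component_set (D - {g t}) (g 1)" for t
  have PQ: "P t \<inter> Q t = {}" if "t \<in> {0<..<1}" for t
    using dendrite_arc_separates[OF D g that] by (simp add: P_def Q_def)
  define A where "A = {t \<in> {0<..<1}. f (g t) \<in> P t}"
  obtain d0 where "0 < d0" and d0: "\<And>t. t \<in> {0<..<d0} \<Longrightarrow> f (g t) \<noteq> g t \<Longrightarrow> f (g t) \<in> P t"
    using start by (auto simp: moves_toward_start_def P_def)
  obtain d1 where "0 < d1"
    and d1: "\<And>t. t \<in> {0<..<d1} \<Longrightarrow> f (g (1 - t)) \<noteq> g (1 - t) \<Longrightarrow> f (g (1 - t)) \<in> Q (1 - t)"
    using finish by (auto simp: moves_toward_start_def Q_def reversepath_def)
  define s t where "s = min (d0/2) (1/2)" and "t = max (1 - d1/2) (1/2)"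
  have "s \<in> A" using d0[of s] moved[of s] \<open>0 < d0\<close> by (auto simp: A_def s_def)
  moreover have "s \<le> t" by (simp add: s_def t_def)
  ultimately have "t \<in> A"
  proof (rule real_interval_persistence)
    fix u assume "u \<in> A"
    then have u: "u \<in> {0<..<1}" "f (g u) \<notin> Q u" using PQ by (auto simp: A_def)
    then obtain \<epsilon> where "0 < \<epsilon>" "\<And>v. \<lbrakk>u < v; v < u + \<epsilon>\<rbrakk> \<Longrightarrow> f (g v) \<in> P v"
      using arc_push_to_start_component[OF D' g f u(1) moved[OF u(1)]] by (auto simp: Q_def P_def)
    then show "\<exists>\<epsilon>>0. \<forall>v. u < v \<and> v < u + \<epsilon> \<longrightarrow> v \<in> A"
      using u(1) by (intro exI[of _ "min \<epsilon> (1 - u)"]) (auto simp: A_def)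
  next
    fix u assume "u \<notin> A" "s < u" "u \<le> t"
    then have u: "u \<in> {0<..<1}" "f (g u) \<notin> P u"
      using \<open>0 < d0\<close> \<open>0 < d1\<close> by (auto simp: A_def s_def t_def)
    then obtain \<epsilon> where "0 < \<epsilon>" "\<And>v. \<lbrakk>u - \<epsilon> < v; v < u\<rbrakk> \<Longrightarrow> f (g v) \<in> Q v"
      using arc_push_to_end_component[OF D' g f u(1) moved[OF u(1)]] by (auto simp: Q_def P_def)
    then show "\<exists>\<epsilon>>0. \<forall>v. u - \<epsilon> < v \<and> v < u \<longrightarrow> v \<notin> A"
      using PQ by (auto simp: A_def)
  qed
  moreover have "f (g t) \<in> Q t" "t \<in> {0<..<1}"
    using d1[of "1 - t"] moved[of t] \<open>0 < d1\<close> by (auto simp: t_def)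
  ultimately show False using PQ by (auto simp: A_def)
qed

theorem lemma21:
  fixes D :: "'a::metric_space set" and f :: "'a \<Rightarrow> 'a" and p q :: 'a
  assumes "dendrite D" and "nondegenerate D"
    and "continuous_on D f" and "f ` D \<subseteq> D"
    and "endpoint D p" and "endpoint D q" and "p \<noteq> q"
    and "f p = p" and "f q = q"
    and "\<not> weakly_repelling D f p (D - {p})"
    and "\<not> weakly_repelling D f q (D - {q})"
  shows "\<exists>r. cutpoint D r \<and> r \<in> open_darc D p q \<and> f r = r"
proof -
  have D: "compact D" "locally connected D" "connected D" using assms(1) by (auto simp: dendrite_def)
  have "p \<in> D" "q \<in> D" using assms(5,6) by (auto simp: endpoint_def)
  then obtain g where g: "arc g" "path_image g \<subseteq> D" "pathstart g = p" "pathfinish g = q"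
    using compact_locally_connected_openin_arc[OF D(1,2) openin_subtopology_self D(3)] assms(7) by metis
  have "moves_toward_start D f g"
    by (rule not_weakly_repelling_imp_moves_toward_start[OF assms(10) assms(1,4) g(1-3)])
  moreover have "moves_toward_start D f (reversepath g)"
    using not_weakly_repelling_imp_moves_toward_start[OF assms(11) assms(1,4) arc_reversepath[OF g(1)]] g
    by simp
  ultimately obtain t where t: "t \<in> {0<..<1}" "f (g t) = g t"
    using dendrite_arc_fixed_point[OF assms(1) g(1,2) assms(3,4)] by blast
  have "g t \<noteq> p" "g t \<noteq> q"
    using g(1,3,4) t(1) by (auto simp: arc_def pathstart_def pathfinish_def dest: inj_onD)
  moreover have "g t \<in> darc D p q"
    using g t(1) assms(7) by (auto simp: darc_def path_image_def)
  ultimately have "g t \<in> open_darc D p q" by (simp add: open_darc_def)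
  then show ?thesis using dendrite_arc_interior_cutpoint[OF assms(1) g(1,2) t(1)] t(2) by blast
qed

end
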